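(* Let $n\ge3$ be odd and let $M$ be the sub-add move matrix. Then the length of every directed cycle in $\Gamma_{M,\,n}$ divides $4\varphi(n)$, where $\varphi$ is Euler's totient function.
   Context: The sub-add move matrix is $M=\begin{pmatrix}1&-1\\1&1\end{pmatrix}$. For $n\in\mathbb N$, $\Gamma_{M,\,n}$ is the directed graph with vertex set $\mathbb Z_n^2$ and arcs $((a,b),(a-b,a+b))$ for all $(a,b)\in\mathbb Z_n^2$ (computed mod $n$; loops allowed). A directed cycle is a cycle in the underlying undirected graph such that in the induced directed subgraph every vertex has in-degree and out-degree $1$; a loop counts as a directed $1$-cycle and a pair of opposite arcs as a directed $2$-cycle. *)

theory Defs
  imports "HOL-Number_Theory.Number_Theory"
begin

text \<open>The sub-add move matrix M = [[1,-1],[1,1]] acting on Z_n^2.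
  Z_n is represented by the residues {0..<n} of int; arithmetic is taken mod n.\<close>

definition subadd_move :: "nat \<Rightarrow> int \<times> int \<Rightarrow> int \<times> int" where
  "subadd_move n v = ((fst v - snd v) mod int n, (fst v + snd v) mod int n)"

definition gamma_vertices :: "nat \<Rightarrow> (int \<times> int) set" where
  "gamma_vertices n = {0..<int n} \<times> {0..<int n}"

definition gamma_arc :: "nat \<Rightarrow> int \<times> int \<Rightarrow> int \<times> int \<Rightarrow> bool" where
  "gamma_arc n u v \<longleftrightarrow> u \<in> gamma_vertices n \<and> v = subadd_move n u"

text \<open>A directed cycle of length k = length vs: distinct vertices v_0,...,v_{k-1}
  with arcs v_i -> v_{(i+1) mod k}. (Length 1 = loop, length 2 = pair of opposite arcs.)\<close>
definition gamma_directed_cycle :: "nat \<Rightarrow> (int \<times> int) list \<Rightarrow> bool" where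
  "gamma_directed_cycle n vs \<longleftrightarrow>
     vs \<noteq> [] \<and> distinct vs \<and> set vs \<subseteq> gamma_vertices n \<and>
     (\<forall>i < length vs. gamma_arc n (vs ! i) (vs ! ((i + 1) mod length vs)))"

end

theory Submission
  imports Defs
begin

text \<open>Since M^2 = [[0,-2],[2,0]], we have M^4 = -4 I, so 4k steps of the sub-add move multiply
  a vertex by (-4)^k modulo n. For odd n the number 4 is a unit modulo n and totient n is even
  (or n = 1), so Euler's theorem makes 4 * totient n steps the identity on Z_n^2. Every vertex of
  a directed cycle returns to itself after exactly as many steps as the cycle has vertices, and
  only after multiples of that, so the length of the cycle divides 4 * totient n.\<close>

lemma funpow_cycle_nth:
  assumes "vs \<noteq> []"
    and step: "\<forall>i < length vs. vs ! ((i + 1) mod length vs) = f (vs ! i)"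
  shows "(f ^^ m) (vs ! 0) = vs ! (m mod length vs)"
proof (induction m)
  case 0
  then show ?case by simp
next
  case (Suc m)
  have "m mod length vs < length vs"
    using assms(1) by simp
  then have "vs ! (Suc (m mod length vs) mod length vs) = f (vs ! (m mod length vs))"
    using step by simp
  then show ?case
    using Suc.IH by (simp add: mod_Suc_eq)
qed

lemma distinct_cycle_length_dvd:
  assumes "distinct vs" "vs \<noteq> []"
    and "\<forall>i < length vs. vs ! ((i + 1) mod length vs) = f (vs ! i)"
    and "(f ^^ m) (vs ! 0) = vs ! 0"
  shows "length vs dvd m"
proof -
  have "vs ! (m mod length vs) = vs ! 0"
    using funpow_cycle_nth[OF assms(2,3)] assms(4) by simp
  then have "m mod length vs = 0"
    using assms(1,2) by (simp add: nth_eq_iff_index_eq)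
  then show ?thesis
    by (simp add: mod_eq_0_iff_dvd)
qed

lemma subadd_move_funpow_2:
  "(subadd_move n ^^ 2) (a, b) = ((- 2 * b) mod int n, (2 * a) mod int n)"
proof -
  have "((a - b) mod int n - (a + b) mod int n) mod int n = (- 2 * b) mod int n"
    by (simp add: mod_diff_eq)
  moreover have "((a - b) mod int n + (a + b) mod int n) mod int n = (2 * a) mod int n"
    by (simp add: mod_add_eq)
  ultimately show ?thesis
    by (simp add: subadd_move_def numeral_2_eq_2)
qed

lemma subadd_move_funpow_4:
  "(subadd_move n ^^ 4) (a, b) = ((- 4 * a) mod int n, (- 4 * b) mod int n)"
proof -
  have "(subadd_move n ^^ 4) (a, b) = (subadd_move n ^^ 2) ((subadd_move n ^^ 2) (a, b))"
    by (simp add: funpow_add [of 2 2, simplified])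
  also have "\<dots> = ((- 2 * ((2 * a) mod int n)) mod int n, (2 * ((- 2 * b) mod int n)) mod int n)"
    by (simp only: subadd_move_funpow_2)
  also have "\<dots> = ((- 2 * (2 * a)) mod int n, (2 * (- 2 * b)) mod int n)"
    by (simp only: mod_mult_right_eq)
  also have "\<dots> = ((- 4 * a) mod int n, (- 4 * b) mod int n)"
    by simp
  finally show ?thesis .
qed

lemma subadd_move_funpow_4_mult:
  "(subadd_move n ^^ (4 * j)) (a mod int n, b mod int n)
     = (((- 4) ^ j * a) mod int n, ((- 4) ^ j * b) mod int n)"
proof (induction j)
  case 0
  then show ?case by simp
next
  case (Suc j)
  have "(subadd_move n ^^ (4 * Suc j)) (a mod int n, b mod int n)
      = (subadd_move n ^^ 4) ((subadd_move n ^^ (4 * j)) (a mod int n, b mod int n))"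
    by (simp add: funpow_add)
  also have "\<dots> = ((- 4 * (((- 4) ^ j * a) mod int n)) mod int n,
                   (- 4 * (((- 4) ^ j * b) mod int n)) mod int n)"
    by (simp only: Suc.IH subadd_move_funpow_4)
  also have "\<dots> = ((- 4 * ((- 4) ^ j * a)) mod int n, (- 4 * ((- 4) ^ j * b)) mod int n)"
    by (simp only: mod_mult_right_eq)
  also have "\<dots> = (((- 4) ^ Suc j * a) mod int n, ((- 4) ^ Suc j * b) mod int n)"
    by (simp add: mult.assoc)
  finally show ?case .
qed

lemma neg_four_pow_totient_cong:
  assumes "odd n"
  shows "[(- 4 :: int) ^ totient n = 1] (mod int n)"
proof (cases "n = 1")
  case True
  then show ?thesis by simp
next
  case False
  with assms have "n > 2"
    by presburger
  then have "even (totient n)"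
    by (rule totient_even)
  moreover have "coprime (2 :: nat) n"
    using assms by simp
  then have "coprime ((2 :: nat) ^ 2) n"
    by (simp only: coprime_power_left_iff simp_thms)
  then have "[(2 ^ 2) ^ totient n = 1] (mod n)"
    by (rule euler_theorem)
  then have "[(4 :: int) ^ totient n = 1] (mod int n)"
    using cong_int_iff [of "(2 ^ 2) ^ totient n" 1 n] by simp
  ultimately show ?thesis
    by simp
qed

lemma subadd_move_funpow_4_totient:
  assumes "odd n" "v \<in> gamma_vertices n"
  shows "(subadd_move n ^^ (4 * totient n)) v = v"
proof -
  obtain a b where v: "v = (a, b)" and a: "a mod int n = a" and b: "b mod int n = b"
    using assms(2) by (cases v) (auto simp: gamma_vertices_def)
  have "[(- 4) ^ totient n * x = x] (mod int n)" for x :: int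
    using cong_scalar_right [OF neg_four_pow_totient_cong [OF assms(1)]] by simp
  then have "((- 4) ^ totient n * x) mod int n = x mod int n" for x :: int
    by (simp add: cong_def)
  then have "(subadd_move n ^^ (4 * totient n)) (a mod int n, b mod int n)
      = (a mod int n, b mod int n)"
    by (simp add: subadd_move_funpow_4_mult)
  then show ?thesis
    using v a b by simp
qed

theorem theorem6p2:
  fixes n :: nat and vs :: "(int \<times> int) list"
  assumes "n \<ge> 3" and "odd n"
    and "gamma_directed_cycle n vs"
  shows "length vs dvd 4 * totient n"
proof -
  have "distinct vs" "vs \<noteq> []"
    and step: "\<forall>i < length vs. vs ! ((i + 1) mod length vs) = subadd_move n (vs ! i)"
    and "set vs \<subseteq> gamma_vertices n"
    using assms(3) by (auto simp: gamma_directed_cycle_def gamma_arc_def)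
  then have "vs ! 0 \<in> gamma_vertices n"
    using nth_mem by blast
  with assms(2) have "(subadd_move n ^^ (4 * totient n)) (vs ! 0) = vs ! 0"
    by (rule subadd_move_funpow_4_totient)
  with \<open>distinct vs\<close> \<open>vs \<noteq> []\<close> step show ?thesis
    by (rule distinct_cycle_length_dvd)
qed

end
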